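(* Let $X$ be a compact space and let $E$ be an equivalence relation on $X$. If $E$ has an equivalence class which is not closed, then $E$ does not have any closed graphing of finite diameter.
   Context: A graphing of $E$ is a simple undirected graph $G\subseteq X\times X$ whose connectedness relation (connected by a finite path) equals $E$; it is closed if $G$ is closed in $X\times X$. $G$ has finite diameter $k$ if $k$ is the least integer such that any two $G$-connected points are joined by a path of length at most $k$. Spaces are recursive Polish spaces. *)

theory Defs
  imports "HOL-Analysis.Analysis"
begin

definition graphing :: "('a \<times> 'a) set \<Rightarrow> ('a \<times> 'a) set \<Rightarrow> bool" where
  "graphing E G \<longleftrightarrow> sym G \<and> irrefl G \<and> G\<^sup>* = E"

definition finite_diameter :: "('a \<times> 'a) set \<Rightarrow> bool" where
  "finite_diameter G \<longleftrightarrow> (\<exists>k::nat. \<forall>x y. (x, y) \<in> G\<^sup>* \<longrightarrow> (\<exists>n\<le>k. (x, y) \<in> G ^^ n))"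

end

theory Submission
  imports Defs
begin

text \<open>If G is a closed graphing of E with diameter k, then E is the union of the finitely
  many relation powers G^0, ..., G^k. Each power is closed: the composite of two closed
  relations is the projection of a closed set along a compact factor, and such projections
  are closed maps. Hence E is closed, and so is each of its classes, being a slice of E.\<close>

lemma closed_Id: "closed (Id :: ('a::t2_space \<times> 'a) set)"
proof -
  have "Id = {y. \<exists>x::'a. y = (x, x)}" by auto
  then show ?thesis using closed_diagonal by metis
qed

lemma closed_relcomp:
  fixes R :: "('a::topological_space \<times> 'b::topological_space) set"
    and S :: "('b \<times> 'c::topological_space) set"
  assumes "compact (UNIV :: 'b set)" and "closed R" and "closed S"
  shows "closed (R O S)"
proof -
  define T :: "(('a \<times> 'c) \<times> 'b) set"
    where "T = {((x, z), y). (x, y) \<in> R \<and> (y, z) \<in> S}"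
  have "T = (\<lambda>((x, z), y). (x, y)) -` R \<inter> (\<lambda>((x, z), y). (y, z)) -` S"
    unfolding T_def by auto
  then have "closed T"
    using assms(2,3) by (auto intro!: closed_Int continuous_closed_vimage continuous_intros
        simp: case_prod_beta)
  moreover have "closed_map euclidean euclidean (fst :: ('a \<times> 'c) \<times> 'b \<Rightarrow> 'a \<times> 'c)"
    using closed_map_fst[of "euclidean :: 'b topology" "euclidean :: ('a \<times> 'c) topology"]
      assms(1) by (simp add: compact_space_def euclidean_product_topology)
  moreover have "fst ` T = R O S"
    unfolding T_def by (force simp: relcomp.simps)
  ultimately show ?thesis
    by (metis closed_closedin closed_map_def)
qed

lemma closed_relpow:
  fixes G :: "('a::t2_space \<times> 'a) set"
  assumes "compact (UNIV :: 'a set)" and "closed G"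
  shows "closed (G ^^ n)"
  by (induction n) (simp_all add: closed_Id closed_relcomp assms)

lemma rtrancl_eq_UN_relpow_if_finite_diameter:
  assumes "finite_diameter G"
  obtains k where "G\<^sup>* = (\<Union>n\<le>k. G ^^ n)"
proof -
  obtain k where "\<forall>x y. (x, y) \<in> G\<^sup>* \<longrightarrow> (\<exists>n\<le>k. (x, y) \<in> G ^^ n)"
    using assms unfolding finite_diameter_def by blast
  then have "G\<^sup>* = (\<Union>n\<le>k. G ^^ n)"
    by (auto simp: rtrancl_power) (meson atMost_iff)
  then show ?thesis by (rule that)
qed

lemma closed_rtrancl_if_finite_diameter:
  fixes G :: "('a::t2_space \<times> 'a) set"
  assumes "compact (UNIV :: 'a set)" and "closed G" and "finite_diameter G"
  shows "closed (G\<^sup>*)"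
proof -
  obtain k where "G\<^sup>* = (\<Union>n\<le>k. G ^^ n)"
    using assms(3) by (rule rtrancl_eq_UN_relpow_if_finite_diameter)
  then show ?thesis
    using closed_relpow[OF assms(1,2)] by (simp add: closed_UN)
qed

lemma closed_Image_singleton:
  fixes E :: "('a::topological_space \<times> 'b::topological_space) set"
  assumes "closed E"
  shows "closed (E `` {x})"
proof -
  have "E `` {x} = (\<lambda>y. (x, y)) -` E" by auto
  moreover have "closed ((\<lambda>y. (x, y)) -` E)"
    by (intro continuous_closed_vimage assms continuous_intros)
  ultimately show ?thesis by simp
qed

theorem theorem3p5:
  fixes E :: "('a::polish_space \<times> 'a) set"
  assumes "compact (UNIV :: 'a set)"
    and "equiv UNIV E"
    and "\<exists>x. \<not> closed (E `` {x})"
  shows "\<not> (\<exists>G. graphing E G \<and> closed G \<and> finite_diameter G)"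
proof
  assume "\<exists>G. graphing E G \<and> closed G \<and> finite_diameter G"
  then obtain G where "G\<^sup>* = E" and "closed G" and "finite_diameter G"
    unfolding graphing_def by blast
  then have "closed E"
    using closed_rtrancl_if_finite_diameter assms(1) by blast
  then show False
    using assms(3) closed_Image_singleton by blast
qed

end
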